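(* Let $R$ be a finite set of terminals, let $T$ be a spanning tree on vertex set $R$ (possibly with parallel edges in its ambient multigraph) with nonnegative edge costs $c$, and let $x$ be any feasible solution of the constraint system \[ \sum_{K:\,K\cap S\neq\varnothing} x_K(|K\cap S|-1)\le |S|-1\ \ \forall\, \varnothing\neq S\subseteq R,\qquad \sum_K x_K(|K|-1)=|R|-1,\qquad x_K\ge 0, \] where $K$ ranges over subsets of $R$ with $|K|\ge2$. Then \[ \sum_K x_K\,\mathrm{drop}_T(K)\ \ge\ c(T). \]
   Context: For $K\subseteq R$, $T/K$ denotes the multigraph obtained from $T$ by identifying all terminals of $K$ into a single vertex (edges keep their costs; loops may be discarded). $\mathrm{Drop}_T(K)=E(T)\setminus E(\mathrm{MST}(T/K))$ is the set of edges of $T$ not contained in a chosen minimum spanning tree of $T/K$, and $\mathrm{drop}_T(K)$ is its total cost, i.e. $\mathrm{drop}_T(K)=c(T)-\mathrm{mst}(T/K)$, where $\mathrm{mst}$ denotes the cost of a minimum spanning tree. $c(T)$ is the total cost of the edges of $T$. *)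

theory Defs
  imports Complex_Main
begin

text \<open>A multigraph on vertex set R is given by an edge index set E and an endpoint map
  ends :: 'e => 'a * 'a.  Contracting a terminal set K identifies all vertices of K;
  connectivity in the multigraph (V, F) after contraction by K is the reflexive transitive
  closure of the (symmetric) edge relation of F together with K x K.\<close>

definition edge_rel :: "('e \<Rightarrow> 'a \<times> 'a) \<Rightarrow> 'e set \<Rightarrow> ('a \<times> 'a) set" where
  "edge_rel ends F = {(u, v). \<exists>e\<in>F. ends e = (u, v) \<or> ends e = (v, u)}"

definition conn :: "('e \<Rightarrow> 'a \<times> 'a) \<Rightarrow> 'a set \<Rightarrow> 'e set \<Rightarrow> ('a \<times> 'a) set" where
  "conn ends K F = (edge_rel ends F \<union> K \<times> K)\<^sup>*"

text \<open>F is (the edge set of) a spanning tree of the multigraph (R, E)/K: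
  F is a subset of E, connects all vertices of the contracted graph, and is acyclic
  (no edge of F lies on a cycle: its endpoints are not connected without it; in particular
  no loop of the contracted graph belongs to F).\<close>

definition is_spanning_tree_contr ::
    "'a set \<Rightarrow> ('e \<Rightarrow> 'a \<times> 'a) \<Rightarrow> 'e set \<Rightarrow> 'a set \<Rightarrow> 'e set \<Rightarrow> bool" where
  "is_spanning_tree_contr R ends E K F \<longleftrightarrow>
     F \<subseteq> E \<and>
     (\<forall>u\<in>R. \<forall>v\<in>R. (u, v) \<in> conn ends K F) \<and>
     (\<forall>e\<in>F. ends e \<notin> conn ends K (F - {e}))"

definition mst_contr ::
    "'a set \<Rightarrow> ('e \<Rightarrow> 'a \<times> 'a) \<Rightarrow> 'e set \<Rightarrow> ('e \<Rightarrow> real) \<Rightarrow> 'a set \<Rightarrow> real" where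
  "mst_contr R ends E c K = Min {sum c F | F. is_spanning_tree_contr R ends E K F}"

definition drop_T ::
    "'a set \<Rightarrow> ('e \<Rightarrow> 'a \<times> 'a) \<Rightarrow> 'e set \<Rightarrow> ('e \<Rightarrow> real) \<Rightarrow> 'a set \<Rightarrow> real" where
  "drop_T R ends E c K = sum c E - mst_contr R ends E c K"

definition hyperedges :: "'a set \<Rightarrow> 'a set set" where
  "hyperedges R = {K. K \<subseteq> R \<and> 2 \<le> card K}"

end

theory Submission
  imports Defs
begin

text \<open>
  Fix a cost threshold t and let L be the set of edges of T of cost at most t.
  Since T is a tree, T has exactly ncomp(L) - 1 edges of cost > t, where ncomp(L) is the
  number of components of (R, L).  For a hyperedge K choose a minimum spanning tree F of T/K;
  by the cycle property its edges of cost > t form a forest on top of L with K contracted,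
  so Drop(K) = E - F contains at least hits(K) - 1 edges of cost > t, hits(K) being the
  number of components of (R, L) met by K.  Summing the subtour constraints over these
  components and using the equality constraint gives \<Sum>K x K (hits(K) - 1) \<ge> ncomp(L) - 1.
  Hence for every t the x-weighted number of dropped edges of cost > t is at least the number
  of edges of T of cost > t, and integrating over t (layer-cake principle) yields the claim.
\<close>

definition components :: "'a set \<Rightarrow> ('a \<times> 'a) set \<Rightarrow> 'a set set" where
  "components R Q = (\<lambda>v. Q\<^sup>* `` {v}) ` R"

definition ncomp :: "'a set \<Rightarrow> ('a \<times> 'a) set \<Rightarrow> nat" where
  "ncomp R Q = card (components R Q)"

definition hits :: "'a set \<Rightarrow> ('a \<times> 'a) set \<Rightarrow> 'a set \<Rightarrow> nat" where
  "hits R Q S = card {C \<in> components R Q. C \<inter> S \<noteq> {}}"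

lemma rtrancl_sym: "sym Q \<Longrightarrow> (u, v) \<in> Q\<^sup>* \<Longrightarrow> (v, u) \<in> Q\<^sup>*"
  using sym_rtrancl by (metis symD)

lemma component_eq: "sym Q \<Longrightarrow> (u, v) \<in> Q\<^sup>* \<Longrightarrow> Q\<^sup>* `` {u} = Q\<^sup>* `` {v}"
  using rtrancl_sym by (fastforce intro: rtrancl_trans)

lemma finite_components: "finite R \<Longrightarrow> finite (components R Q)"
  unfolding components_def by simp

lemma rtrancl_Un_square:
  assumes symQ: "sym Q"
  shows "(Q \<union> S \<times> S)\<^sup>* = Q\<^sup>* \<union> (Q\<^sup>* `` S) \<times> (Q\<^sup>* `` S)"
proof
  show "(Q \<union> S \<times> S)\<^sup>* \<subseteq> Q\<^sup>* \<union> (Q\<^sup>* `` S) \<times> (Q\<^sup>* `` S)"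
  proof (rule subrelI)
    fix a b assume "(a, b) \<in> (Q \<union> S \<times> S)\<^sup>*"
    then show "(a, b) \<in> Q\<^sup>* \<union> (Q\<^sup>* `` S) \<times> (Q\<^sup>* `` S)"
    proof (induction rule: rtrancl_induct)
      case (step b c)
      then show ?case
        using rtrancl_sym[OF symQ] by (auto intro: rtrancl_into_rtrancl rtrancl_trans)
    qed simp
  qed
  have "(a, b) \<in> (Q \<union> S \<times> S)\<^sup>*" if "s \<in> S" "(s, a) \<in> Q\<^sup>*" "s' \<in> S" "(s', b) \<in> Q\<^sup>*"
    for a b s s'
  proof -
    have "Q\<^sup>* \<subseteq> (Q \<union> S \<times> S)\<^sup>*" by (rule rtrancl_mono) blast
    then have "(a, s) \<in> (Q \<union> S \<times> S)\<^sup>*" "(s', b) \<in> (Q \<union> S \<times> S)\<^sup>*"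
      using that rtrancl_sym[OF symQ] by blast+
    moreover have "(s, s') \<in> (Q \<union> S \<times> S)\<^sup>*" using that by blast
    ultimately show ?thesis by (meson rtrancl_trans)
  qed
  moreover have "Q\<^sup>* \<subseteq> (Q \<union> S \<times> S)\<^sup>*" by (rule rtrancl_mono) blast
  ultimately show "Q\<^sup>* \<union> (Q\<^sup>* `` S) \<times> (Q\<^sup>* `` S) \<subseteq> (Q \<union> S \<times> S)\<^sup>*" by blast
qed

lemma components_Un_square:
  assumes symQ: "sym Q" and SR: "S \<subseteq> R" and Sne: "S \<noteq> {}"
  shows "components R (Q \<union> S \<times> S) = insert (Q\<^sup>* `` S) {C \<in> components R Q. C \<inter> S = {}}"
proof -
  define M where "M = Q\<^sup>* `` S"
  have closed: "Q\<^sup>* `` {v} \<subseteq> M" if "v \<in> M" for v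
    using that unfolding M_def by (auto intro: rtrancl_trans)
  have apart: "v \<notin> M \<longleftrightarrow> Q\<^sup>* `` {v} \<inter> S = {}" for v
    unfolding M_def using rtrancl_sym[OF symQ] by blast
  have reach: "(Q \<union> S \<times> S)\<^sup>* `` {v} = (if v \<in> M then M else Q\<^sup>* `` {v})" for v
    unfolding rtrancl_Un_square[OF symQ] M_def[symmetric] using closed by auto
  obtain s where s: "s \<in> S" using Sne by blast
  have "M = (Q \<union> S \<times> S)\<^sup>* `` {s}" using s reach unfolding M_def by auto
  then have "M \<in> components R (Q \<union> S \<times> S)" using s SR unfolding components_def by blast
  then show ?thesis
    unfolding components_def M_def[symmetric] using reach apart by auto
qed

lemma ncomp_Un_square:
  assumes finR: "finite R" and symQ: "sym Q" and SR: "S \<subseteq> R" and Sne: "S \<noteq> {}"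
  shows "ncomp R (Q \<union> S \<times> S) + hits R Q S = ncomp R Q + 1"
proof -
  have fin: "finite (components R Q)" using finR by (rule finite_components)
  have "Q\<^sup>* `` S \<notin> {C \<in> components R Q. C \<inter> S = {}}" using Sne by auto
  then have "ncomp R (Q \<union> S \<times> S) = card {C \<in> components R Q. C \<inter> S = {}} + 1"
    unfolding ncomp_def components_Un_square[OF symQ SR Sne] using fin by simp
  moreover have "ncomp R Q = card {C \<in> components R Q. C \<inter> S = {}} + hits R Q S"
  proof -
    have "components R Q = {C \<in> components R Q. C \<inter> S = {}} \<union> {C \<in> components R Q. C \<inter> S \<noteq> {}}"
      by blast
    then show ?thesis unfolding ncomp_def hits_def using fin
      by (metis (no_types, lifting) card_Un_disjoint disjoint_iff finite_Un mem_Collect_eq)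
  qed
  ultimately show ?thesis by simp
qed

lemma hits_pair:
  assumes symQ: "sym Q" and "u \<in> R" "w \<in> R"
  shows "hits R Q {u, w} = (if (u, w) \<in> Q\<^sup>* then 1 else 2)"
proof -
  have "C = Q\<^sup>* `` {u} \<or> C = Q\<^sup>* `` {w}"
    if C: "C \<in> components R Q" "C \<inter> {u, w} \<noteq> {}" for C
  proof -
    obtain v where "C = Q\<^sup>* `` {v}" "(v, u) \<in> Q\<^sup>* \<or> (v, w) \<in> Q\<^sup>*"
      using C unfolding components_def by blast
    then show ?thesis using component_eq[OF symQ] by blast
  qed
  moreover have "Q\<^sup>* `` {u} \<in> components R Q" "Q\<^sup>* `` {w} \<in> components R Q"
    using assms unfolding components_def by blast+
  moreover have "u \<in> Q\<^sup>* `` {u}" "w \<in> Q\<^sup>* `` {w}" by blast+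
  ultimately have "{C \<in> components R Q. C \<inter> {u, w} \<noteq> {}} = {Q\<^sup>* `` {u}, Q\<^sup>* `` {w}}"
    by blast
  moreover have "Q\<^sup>* `` {u} = Q\<^sup>* `` {w} \<longleftrightarrow> (u, w) \<in> Q\<^sup>*"
    using component_eq[OF symQ] by blast
  ultimately show ?thesis unfolding hits_def by (simp add: card_insert_if)
qed

lemma ncomp_add_edge:
  assumes finR: "finite R" and symQ: "sym Q" and uR: "u \<in> R" and wR: "w \<in> R"
  shows "ncomp R (Q \<union> {(u, w), (w, u)}) + (if (u, w) \<in> Q\<^sup>* then 0 else 1) = ncomp R Q"
proof -
  have "(Q \<union> {(u, w), (w, u)})\<^sup>* = (Q \<union> {u, w} \<times> {u, w})\<^sup>*"
    by (rule sym, rule rtrancl_subset) auto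
  then have "ncomp R (Q \<union> {(u, w), (w, u)}) = ncomp R (Q \<union> {u, w} \<times> {u, w})"
    unfolding ncomp_def components_def by simp
  moreover have "ncomp R (Q \<union> {u, w} \<times> {u, w}) + hits R Q {u, w} = ncomp R Q + 1"
    using ncomp_Un_square[OF finR symQ, of "{u, w}"] uR wR by simp
  ultimately show ?thesis using hits_pair[OF symQ uR wR] by (simp split: if_splits)
qed

lemma ncomp_pos: "finite R \<Longrightarrow> R \<noteq> {} \<Longrightarrow> 1 \<le> ncomp R Q"
  unfolding ncomp_def components_def by (simp add: Suc_leI card_gt_0_iff)

lemma ncomp_eq_1_iff:
  assumes "finite R" "R \<noteq> {}" "sym Q"
  shows "ncomp R Q = 1 \<longleftrightarrow> (\<forall>u\<in>R. \<forall>v\<in>R. (u, v) \<in> Q\<^sup>*)"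
proof
  assume "ncomp R Q = 1"
  then obtain C where C: "components R Q = {C}" unfolding ncomp_def by (auto simp: card_Suc_eq)
  show "\<forall>u\<in>R. \<forall>v\<in>R. (u, v) \<in> Q\<^sup>*"
  proof (intro ballI)
    fix u v assume "u \<in> R" "v \<in> R"
    then have "Q\<^sup>* `` {u} = C" "Q\<^sup>* `` {v} = C" using C unfolding components_def by auto
    then show "(u, v) \<in> Q\<^sup>*" by (metis Image_singleton_iff rtrancl.rtrancl_refl)
  qed
next
  assume conn: "\<forall>u\<in>R. \<forall>v\<in>R. (u, v) \<in> Q\<^sup>*"
  obtain r where r: "r \<in> R" using assms by auto
  have "components R Q = {Q\<^sup>* `` {r}}"
    unfolding components_def using r conn component_eq[OF assms(3)] by force
  then show "ncomp R Q = 1" unfolding ncomp_def by simp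
qed

lemma component_subset:
  assumes QR: "Q \<subseteq> R \<times> R" and C: "C \<in> components R Q"
  shows "C \<subseteq> R"
proof
  fix y assume "y \<in> C"
  then obtain v where v: "v \<in> R" and reach: "(v, y) \<in> Q\<^sup>*"
    using C unfolding components_def by blast
  from reach show "y \<in> R" by (induction rule: rtrancl_induct) (use v QR in auto)
qed

lemma sum_card_Int_components:
  assumes finR: "finite R" and symQ: "sym Q" and QR: "Q \<subseteq> R \<times> R" and KR: "K \<subseteq> R"
  shows "(\<Sum>C\<in>components R Q. card (K \<inter> C)) = card K"
proof -
  have disjoint: "C1 \<inter> C2 = {}"
    if C12: "C1 \<in> components R Q" "C2 \<in> components R Q" "C1 \<noteq> C2" for C1 C2
  proof (rule ccontr)
    assume "C1 \<inter> C2 \<noteq> {}"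
    then obtain y where "y \<in> C1" "y \<in> C2" by blast
    moreover obtain v1 v2 where "C1 = Q\<^sup>* `` {v1}" "C2 = Q\<^sup>* `` {v2}"
      using C12 unfolding components_def by blast
    ultimately have "C1 = Q\<^sup>* `` {y}" "C2 = Q\<^sup>* `` {y}" using component_eq[OF symQ] by auto
    then show False using C12(3) by simp
  qed
  have "card (\<Union>C\<in>components R Q. K \<inter> C) = (\<Sum>C\<in>components R Q. card (K \<inter> C))"
  proof (rule card_UN_disjoint)
    show "finite (components R Q)" using finR by (rule finite_components)
    show "\<forall>C\<in>components R Q. finite (K \<inter> C)" using KR finR by (meson finite_Int finite_subset)
    show "\<forall>C1\<in>components R Q. \<forall>C2\<in>components R Q. C1 \<noteq> C2 \<longrightarrow> (K \<inter> C1) \<inter> (K \<inter> C2) = {}"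
      using disjoint by blast
  qed
  moreover have "(\<Union>C\<in>components R Q. K \<inter> C) = K"
    using KR unfolding components_def by blast
  ultimately show ?thesis by simp
qed

lemma sum_components_excess:
  assumes finR: "finite R" and symQ: "sym Q" and QR: "Q \<subseteq> R \<times> R" and KR: "K \<subseteq> R"
  shows "(\<Sum>C\<in>components R Q. if K \<inter> C \<noteq> {} then real (card (K \<inter> C)) - 1 else 0)
           = real (card K) - real (hits R Q K)"
proof -
  have "(\<Sum>C\<in>components R Q. if K \<inter> C \<noteq> {} then real (card (K \<inter> C)) - 1 else 0)
      = (\<Sum>C\<in>components R Q. real (card (K \<inter> C)) - (if C \<inter> K \<noteq> {} then 1 else 0))"
    by (rule sum.cong) (auto simp: Int_commute)
  also have "\<dots> = real (card K) - real (hits R Q K)"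
    using sum_card_Int_components[OF finR symQ QR KR] finite_components[OF finR]
    unfolding hits_def by (simp add: sum_subtractf sum.If_cases Int_def flip: of_nat_sum)
  finally show ?thesis .
qed

lemma edge_rel_insert:
  "edge_rel ends (insert e F) =
     edge_rel ends F \<union> {(fst (ends e), snd (ends e)), (snd (ends e), fst (ends e))}"
  unfolding edge_rel_def by (cases "ends e") auto

lemma edge_rel_Un: "edge_rel ends (F \<union> G) = edge_rel ends F \<union> edge_rel ends G"
  unfolding edge_rel_def by auto

lemma edge_rel_mono: "F \<subseteq> G \<Longrightarrow> edge_rel ends F \<subseteq> edge_rel ends G"
  unfolding edge_rel_def by auto

lemma sym_edge_rel: "sym (edge_rel ends F)"
  unfolding edge_rel_def sym_def by auto

lemma edge_rel_subset:
  "\<forall>e\<in>F. fst (ends e) \<in> R \<and> snd (ends e) \<in> R \<Longrightarrow> edge_rel ends F \<subseteq> R \<times> R"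
  unfolding edge_rel_def by force

definition forest_over :: "('e \<Rightarrow> 'a \<times> 'a) \<Rightarrow> ('a \<times> 'a) set \<Rightarrow> 'e set \<Rightarrow> bool" where
  "forest_over ends B F \<longleftrightarrow> (\<forall>e\<in>F. ends e \<notin> (B \<union> edge_rel ends (F - {e}))\<^sup>*)"

lemma forest_over_subset: "forest_over ends B F \<Longrightarrow> G \<subseteq> F \<Longrightarrow> forest_over ends B G"
  unfolding forest_over_def
proof
  fix g assume forest: "\<forall>e\<in>F. ends e \<notin> (B \<union> edge_rel ends (F - {e}))\<^sup>*" and "G \<subseteq> F" "g \<in> G"
  then have "(B \<union> edge_rel ends (G - {g}))\<^sup>* \<subseteq> (B \<union> edge_rel ends (F - {g}))\<^sup>*"
    by (intro rtrancl_mono Un_mono order.refl edge_rel_mono) auto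
  then show "ends g \<notin> (B \<union> edge_rel ends (G - {g}))\<^sup>*" using forest \<open>G \<subseteq> F\<close> \<open>g \<in> G\<close> by auto
qed

lemma rtrancl_Un_edge_rel_absorb:
  assumes symQ: "sym Q" and within: "\<forall>e\<in>G. ends e \<in> Q\<^sup>*"
  shows "(Q \<union> edge_rel ends G)\<^sup>* = Q\<^sup>*"
proof (rule rtrancl_subset)
  show "Q \<union> edge_rel ends G \<subseteq> Q\<^sup>*"
    using within rtrancl_sym[OF symQ] unfolding edge_rel_def by fastforce
qed blast

text \<open>Adding the edges F to B decreases the number of components by at most card F, with
  equality for a forest (each forest edge merges two components) and strict inequality
  otherwise (a cycle edge merges nothing).\<close>
lemma ncomp_add_edges:
  assumes symB: "sym B" and finR: "finite R" and finF: "finite F"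
    and ends_in: "\<forall>e\<in>F. fst (ends e) \<in> R \<and> snd (ends e) \<in> R"
  shows "ncomp R B \<le> ncomp R (B \<union> edge_rel ends F) + card F
     \<and> (forest_over ends B F \<longrightarrow> ncomp R B = ncomp R (B \<union> edge_rel ends F) + card F)"
  using finF ends_in
proof (induction F rule: finite_induct)
  case empty then show ?case by (simp add: edge_rel_def)
next
  case (insert e F)
  define u where "u = fst (ends e)"
  define w where "w = snd (ends e)"
  define Q where "Q = B \<union> edge_rel ends F"
  have symQ: "sym Q" unfolding Q_def using symB sym_edge_rel by (rule sym_Un)
  have IH: "ncomp R B \<le> ncomp R Q + card F \<and> (forest_over ends B F \<longrightarrow> ncomp R B = ncomp R Q + card F)"
    using insert.IH insert.prems unfolding Q_def by auto
  have uwR: "u \<in> R" "w \<in> R" using insert.prems unfolding u_def w_def by auto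
  have step: "ncomp R (Q \<union> {(u, w), (w, u)}) + (if (u, w) \<in> Q\<^sup>* then 0 else 1) = ncomp R Q"
    using ncomp_add_edge[OF finR symQ uwR] .
  have "B \<union> edge_rel ends (insert e F) = Q \<union> {(u, w), (w, u)}"
    unfolding Q_def u_def w_def edge_rel_insert by auto
  moreover have "(u, w) \<notin> Q\<^sup>*" and "forest_over ends B F" if "forest_over ends B (insert e F)"
  proof -
    show "forest_over ends B F" using forest_over_subset[OF that] by blast
    have "ends e \<notin> (B \<union> edge_rel ends F)\<^sup>*"
      using that insert.hyps(2) unfolding forest_over_def by auto
    then show "(u, w) \<notin> Q\<^sup>*" unfolding Q_def u_def w_def by simp
  qed
  ultimately show ?case using IH step insert.hyps by (auto split: if_splits)
qed

lemma ncomp_add_forest: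
  assumes "sym B" "finite R" "finite F" "\<forall>e\<in>F. fst (ends e) \<in> R \<and> snd (ends e) \<in> R"
    and "forest_over ends B F"
  shows "ncomp R B = ncomp R (B \<union> edge_rel ends F) + card F"
  using ncomp_add_edges[OF assms(1-4)] assms(5) by blast

lemma ncomp_add_cyclic:
  assumes symB: "sym B" and finR: "finite R" and finF: "finite F"
    and ends_in: "\<forall>e\<in>F. fst (ends e) \<in> R \<and> snd (ends e) \<in> R"
    and cyclic: "\<not> forest_over ends B F"
  shows "ncomp R B + 1 \<le> ncomp R (B \<union> edge_rel ends F) + card F"
proof -
  obtain e where e: "e \<in> F" "ends e \<in> (B \<union> edge_rel ends (F - {e}))\<^sup>*"
    using cyclic unfolding forest_over_def by auto
  define Q where "Q = B \<union> edge_rel ends (F - {e})"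
  have symQ: "sym Q" unfolding Q_def using symB sym_edge_rel by (rule sym_Un)
  have "F = (F - {e}) \<union> {e}" using e(1) by blast
  then have "B \<union> edge_rel ends F = Q \<union> edge_rel ends {e}"
    unfolding Q_def by (metis edge_rel_Un Un_assoc)
  moreover have "(Q \<union> edge_rel ends {e})\<^sup>* = Q\<^sup>*" using e(2) unfolding Q_def[symmetric]
    by (intro rtrancl_Un_edge_rel_absorb[OF symQ]) simp
  ultimately have "ncomp R (B \<union> edge_rel ends F) = ncomp R Q"
    unfolding ncomp_def components_def by simp
  moreover have "ncomp R B \<le> ncomp R Q + card (F - {e})"
    using ncomp_add_edges[OF symB finR, of "F - {e}" ends] finF ends_in unfolding Q_def by auto
  moreover have "card (F - {e}) + 1 = card F" using e(1) finF by (metis card_Suc_Diff1 Suc_eq_plus1)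
  ultimately show ?thesis by simp
qed

lemma spanning_tree_contr_iff:
  "is_spanning_tree_contr R ends E K F \<longleftrightarrow>
     F \<subseteq> E \<and> (\<forall>u\<in>R. \<forall>v\<in>R. (u, v) \<in> (K \<times> K \<union> edge_rel ends F)\<^sup>*) \<and> forest_over ends (K \<times> K) F"
  unfolding is_spanning_tree_contr_def forest_over_def conn_def by (simp add: Un_commute)

lemma sym_square: "sym (K \<times> K)"
  unfolding sym_def by auto

lemma sym_square_Un_edge_rel: "sym (K \<times> K \<union> edge_rel ends F)"
  using sym_square sym_edge_rel by (rule sym_Un)

lemma spanning_tree_ncomp:
  assumes finR: "finite R" and Rne: "R \<noteq> {}" and finE: "finite E"
    and ends_in: "\<forall>e\<in>E. fst (ends e) \<in> R \<and> snd (ends e) \<in> R"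
    and tree: "is_spanning_tree_contr R ends E K F"
  shows "ncomp R (K \<times> K) = card F + 1"
proof -
  have FE: "F \<subseteq> E" and conn: "\<forall>u\<in>R. \<forall>v\<in>R. (u, v) \<in> (K \<times> K \<union> edge_rel ends F)\<^sup>*"
    and forest: "forest_over ends (K \<times> K) F"
    using tree unfolding spanning_tree_contr_iff by auto
  have "ncomp R (K \<times> K \<union> edge_rel ends F) = 1"
    using ncomp_eq_1_iff[OF finR Rne sym_square_Un_edge_rel] conn by blast
  moreover have "ncomp R (K \<times> K) = ncomp R (K \<times> K \<union> edge_rel ends F) + card F"
    using ncomp_add_forest[OF sym_square finR _ _ forest] FE finE ends_in
    by (meson finite_subset subsetD)
  ultimately show ?thesis by simp
qed

lemma spanning_tree_delete_edge:
  assumes finR: "finite R" and Rne: "R \<noteq> {}" and finE: "finite E"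
    and ends_in: "\<forall>e\<in>E. fst (ends e) \<in> R \<and> snd (ends e) \<in> R"
    and tree: "is_spanning_tree_contr R ends E K F" and f: "f \<in> F"
  shows "ncomp R (K \<times> K \<union> edge_rel ends (F - {f})) = 2"
proof -
  have FE: "F \<subseteq> E" and forest: "forest_over ends (K \<times> K) F"
    using tree unfolding spanning_tree_contr_iff by auto
  have finF: "finite F" using FE finE by (rule finite_subset)
  have "ncomp R (K \<times> K) = ncomp R (K \<times> K \<union> edge_rel ends (F - {f})) + card (F - {f})"
    using FE finF ends_in
    by (intro ncomp_add_forest[OF sym_square finR _ _ forest_over_subset[OF forest]]) auto
  moreover have "ncomp R (K \<times> K) = card F + 1"
    by (rule spanning_tree_ncomp[OF finR Rne finE ends_in tree])
  moreover have "card (F - {f}) + 1 = card F"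
    using f finF by (metis card_Suc_Diff1 Suc_eq_plus1)
  ultimately show ?thesis by simp
qed

lemma spanning_tree_exchange:
  assumes finR: "finite R" and Rne: "R \<noteq> {}" and finE: "finite E"
    and ends_in: "\<forall>e\<in>E. fst (ends e) \<in> R \<and> snd (ends e) \<in> R"
    and tree: "is_spanning_tree_contr R ends E K F"
    and f: "f \<in> F" and e: "e \<in> E" and reconnects: "ends e \<notin> (K \<times> K \<union> edge_rel ends (F - {f}))\<^sup>*"
  shows "is_spanning_tree_contr R ends E K (insert e (F - {f}))"
proof -
  define Q where "Q = K \<times> K \<union> edge_rel ends (F - {f})"
  define F' where "F' = insert e (F - {f})"
  have FE: "F \<subseteq> E" using tree unfolding spanning_tree_contr_iff by auto
  have finF: "finite F" using FE finE by (rule finite_subset)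
  have F'E: "F' \<subseteq> E" unfolding F'_def using FE e by auto
  have ends_in': "\<forall>e\<in>G. fst (ends e) \<in> R \<and> snd (ends e) \<in> R" if "G \<subseteq> E" for G
    using that ends_in by auto
  have "e \<notin> F - {f}"
    using reconnects unfolding edge_rel_def by (cases "ends e") auto
  then have "card F' = card (F - {f}) + 1" unfolding F'_def using finF by simp
  then have cardF': "card F' = card F" using f finF by (metis card_Suc_Diff1 Suc_eq_plus1)
  have ncompKK: "ncomp R (K \<times> K) = card F + 1"
    by (rule spanning_tree_ncomp[OF finR Rne finE ends_in tree])
  have ncompQ: "ncomp R Q = 2"
    unfolding Q_def by (rule spanning_tree_delete_edge[OF finR Rne finE ends_in tree f])
  have "K \<times> K \<union> edge_rel ends F' = Q \<union> {(fst (ends e), snd (ends e)), (snd (ends e), fst (ends e))}"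
    unfolding F'_def Q_def edge_rel_insert by auto
  moreover have "ncomp R (Q \<union> {(fst (ends e), snd (ends e)), (snd (ends e), fst (ends e))}) + 1 = ncomp R Q"
    using ncomp_add_edge[OF finR, of Q "fst (ends e)" "snd (ends e)"] ends_in e reconnects
    unfolding Q_def by (simp add: sym_square_Un_edge_rel)
  ultimately have ncompF': "ncomp R (K \<times> K \<union> edge_rel ends F') = 1" using ncompQ by simp
  then have "\<forall>u\<in>R. \<forall>v\<in>R. (u, v) \<in> (K \<times> K \<union> edge_rel ends F')\<^sup>*"
    using ncomp_eq_1_iff[OF finR Rne sym_square_Un_edge_rel] by blast
  \<comment> \<open>a cycle in F' would leave more than card F' + 1 = ncomp R (K \<times> K) components\<close>
  moreover have "forest_over ends (K \<times> K) F'"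
  proof (rule ccontr)
    assume "\<not> forest_over ends (K \<times> K) F'"
    from ncomp_add_cyclic[OF sym_square finR _ ends_in'[OF F'E] this] F'E finE
    show False using ncompF' ncompKK cardF' by (simp add: finite_subset)
  qed
  ultimately show ?thesis unfolding spanning_tree_contr_iff F'_def[symmetric] using F'E by blast
qed

text \<open>If (R, E)/K is connected it has a spanning tree: a connected edge set of minimum
  cardinality contains no cycle edge.\<close>
lemma spanning_tree_exists:
  assumes finE: "finite E"
    and conn: "\<forall>u\<in>R. \<forall>v\<in>R. (u, v) \<in> (K \<times> K \<union> edge_rel ends E)\<^sup>*"
  shows "\<exists>F. is_spanning_tree_contr R ends E K F"
proof -
  define S where "S = {F. F \<subseteq> E \<and> (\<forall>u\<in>R. \<forall>v\<in>R. (u, v) \<in> (K \<times> K \<union> edge_rel ends F)\<^sup>*)}"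
  have "E \<in> S" unfolding S_def using conn by auto
  then obtain F where F: "F \<in> S" and least: "\<And>G. G \<in> S \<Longrightarrow> card F \<le> card G"
    using ex_has_least_nat[of "\<lambda>F. F \<in> S" E card] by auto
  have "forest_over ends (K \<times> K) F"
    unfolding forest_over_def
  proof (intro ballI notI)
    fix e assume e: "e \<in> F" and closes: "ends e \<in> (K \<times> K \<union> edge_rel ends (F - {e}))\<^sup>*"
    have "F = (F - {e}) \<union> {e}" using e by blast
    then have "(K \<times> K \<union> edge_rel ends F)\<^sup>* = (K \<times> K \<union> edge_rel ends (F - {e}) \<union> edge_rel ends {e})\<^sup>*"
      by (metis edge_rel_Un Un_assoc)
    also have "\<dots> = (K \<times> K \<union> edge_rel ends (F - {e}))\<^sup>*"
      using closes by (intro rtrancl_Un_edge_rel_absorb sym_square_Un_edge_rel) simp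
    finally have "F - {e} \<in> S" using F unfolding S_def by auto
    moreover have "finite F" using F finE unfolding S_def by (auto intro: finite_subset)
    ultimately show False using least e by (meson card_Diff1_less not_le)
  qed
  then show ?thesis using F unfolding S_def spanning_tree_contr_iff by blast
qed

definition is_mst_contr ::
    "'a set \<Rightarrow> ('e \<Rightarrow> 'a \<times> 'a) \<Rightarrow> 'e set \<Rightarrow> ('e \<Rightarrow> real) \<Rightarrow> 'a set \<Rightarrow> 'e set \<Rightarrow> bool" where
  "is_mst_contr R ends E c K F \<longleftrightarrow> is_spanning_tree_contr R ends E K F \<and>
     (\<forall>G. is_spanning_tree_contr R ends E K G \<longrightarrow> sum c F \<le> sum c G)"

lemma mst_exists:
  fixes c :: "'e \<Rightarrow> real"
  assumes finE: "finite E" and tree: "is_spanning_tree_contr R ends E K F0"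
  shows "\<exists>F. is_mst_contr R ends E c K F \<and> mst_contr R ends E c K = sum c F"
proof -
  define Tr where "Tr = {F. is_spanning_tree_contr R ends E K F}"
  have "finite Tr" unfolding Tr_def is_spanning_tree_contr_def
    by (rule finite_subset[of _ "Pow E"]) (use finE in auto)
  moreover have "Tr \<noteq> {}" using tree unfolding Tr_def by blast
  ultimately have "Min (sum c ` Tr) \<in> sum c ` Tr" "\<forall>G\<in>Tr. Min (sum c ` Tr) \<le> sum c G"
    by simp_all
  moreover have "mst_contr R ends E c K = Min (sum c ` Tr)"
    unfolding mst_contr_def Tr_def by (simp add: setcompr_eq_image)
  ultimately show ?thesis unfolding Tr_def is_mst_contr_def by auto
qed

text \<open>Cycle property of minimum spanning trees: the endpoints of a tree edge f are not joined
  by the other tree edges together with all strictly cheaper edges (otherwise some cheaper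
  edge reconnects T - f and the exchange is cheaper).\<close>
lemma mst_cycle_property:
  assumes finR: "finite R" and Rne: "R \<noteq> {}" and finE: "finite E"
    and ends_in: "\<forall>e\<in>E. fst (ends e) \<in> R \<and> snd (ends e) \<in> R"
    and mst: "is_mst_contr R ends E c K F" and f: "f \<in> F"
  shows "ends f \<notin> (K \<times> K \<union> edge_rel ends ((F - {f}) \<union> {e\<in>E. c e < c f}))\<^sup>*"
proof
  assume closes: "ends f \<in> (K \<times> K \<union> edge_rel ends ((F - {f}) \<union> {e\<in>E. c e < c f}))\<^sup>*"
  define Q where "Q = K \<times> K \<union> edge_rel ends (F - {f})"
  have tree: "is_spanning_tree_contr R ends E K F"
    and minimal: "\<And>G. is_spanning_tree_contr R ends E K G \<Longrightarrow> sum c F \<le> sum c G"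
    using mst unfolding is_mst_contr_def by auto
  have FE: "F \<subseteq> E" and "forest_over ends (K \<times> K) F"
    using tree unfolding spanning_tree_contr_iff by auto
  then have not_closed: "ends f \<notin> Q\<^sup>*" using f unfolding forest_over_def Q_def by blast
  obtain e where e: "e \<in> E" "c e < c f" "ends e \<notin> Q\<^sup>*"
  proof (rule ccontr)
    assume "\<not> thesis"
    then have "\<forall>e\<in>{e\<in>E. c e < c f}. ends e \<in> Q\<^sup>*" using that by blast
    then have "(Q \<union> edge_rel ends {e\<in>E. c e < c f})\<^sup>* = Q\<^sup>*"
      unfolding Q_def by (intro rtrancl_Un_edge_rel_absorb sym_square_Un_edge_rel)
    then show False using closes not_closed unfolding Q_def edge_rel_Un by (simp add: Un_assoc)
  qed
  have "is_spanning_tree_contr R ends E K (insert e (F - {f}))"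
    using spanning_tree_exchange[OF finR Rne finE ends_in tree f e(1)] e(3) unfolding Q_def .
  moreover have "e \<notin> F"
    using e(2,3) unfolding Q_def edge_rel_def by (cases "ends e") auto
  then have "sum c (insert e (F - {f})) = sum c F - c f + c e"
    using f FE finE by (simp add: sum_diff1 finite_subset)
  ultimately show False using minimal e(2) by fastforce
qed

text \<open>The tree edges of cost > t form a forest over
  K \<times> K plus the edges of cost \<le> t (cycle property), so there are fewer of them than
  components of that graph; all other expensive edges of T lie in Drop(K) = E - F.\<close>
lemma mst_threshold:
  assumes finR: "finite R" and Rne: "R \<noteq> {}" and finE: "finite E"
    and ends_in: "\<forall>e\<in>E. fst (ends e) \<in> R \<and> snd (ends e) \<in> R"
    and mst: "is_mst_contr R ends E c K F"
  shows "card {e\<in>E. t < c e} + 1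
           \<le> card {e\<in>E - F. t < c e} + ncomp R (K \<times> K \<union> edge_rel ends {e\<in>E. c e \<le> t})"
proof -
  define B where "B = K \<times> K \<union> edge_rel ends {e\<in>E. c e \<le> t}"
  define D where "D = {e\<in>E. t < c e}"
  define G where "G = F \<inter> D"
  have finD: "finite D" unfolding D_def using finE by simp
  have finG: "finite G" unfolding G_def using finD by simp
  have "forest_over ends B G"
    unfolding forest_over_def
  proof
    fix g assume g: "g \<in> G"
    then have gF: "g \<in> F" and gt: "t < c g" unfolding G_def D_def by auto
    have cheaper: "{e\<in>E. c e \<le> t} \<union> (G - {g}) \<subseteq> (F - {g}) \<union> {e\<in>E. c e < c g}"
      unfolding G_def D_def using gt by auto
    have "edge_rel ends {e\<in>E. c e \<le> t} \<union> edge_rel ends (G - {g})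
                 \<subseteq> edge_rel ends ((F - {g}) \<union> {e\<in>E. c e < c g})"
      using edge_rel_mono[OF cheaper, of ends] by (simp only: edge_rel_Un)
    then have "(B \<union> edge_rel ends (G - {g}))\<^sup>*
                 \<subseteq> (K \<times> K \<union> edge_rel ends ((F - {g}) \<union> {e\<in>E. c e < c g}))\<^sup>*"
      unfolding B_def by (intro rtrancl_mono) blast
    then show "ends g \<notin> (B \<union> edge_rel ends (G - {g}))\<^sup>*"
      using mst_cycle_property[OF finR Rne finE ends_in mst gF] by blast
  qed
  then have "ncomp R B = ncomp R (B \<union> edge_rel ends G) + card G"
    using ncomp_add_forest[OF _ finR finG] ends_in unfolding B_def G_def D_def
    by (simp add: sym_square_Un_edge_rel)
  then have "card G + 1 \<le> ncomp R B" using ncomp_pos[OF finR Rne] by simp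
  moreover have "card D = card {e\<in>E - F. t < c e} + card G"
  proof -
    have "D = {e\<in>E - F. t < c e} \<union> G" "{e\<in>E - F. t < c e} \<inter> G = {}"
      unfolding D_def G_def by auto
    then show ?thesis using finD by (metis card_Un_disjoint finite_Un)
  qed
  ultimately show ?thesis unfolding B_def D_def by simp
qed

lemma tree_threshold_count:
  fixes c :: "'e \<Rightarrow> real"
  assumes finR: "finite R" and Rne: "R \<noteq> {}" and finE: "finite E"
    and ends_in: "\<forall>e\<in>E. fst (ends e) \<in> R \<and> snd (ends e) \<in> R"
    and tree: "is_spanning_tree_contr R ends E {} E"
  shows "card {e\<in>E. t < c e} + 1 = ncomp R (edge_rel ends {e\<in>E. c e \<le> t})"
proof -
  define L where "L = {e\<in>E. c e \<le> t}"
  have "forest_over ends {} E" using tree unfolding spanning_tree_contr_iff by simp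
  then have "ncomp R {} = ncomp R (edge_rel ends L) + card L"
    using ncomp_add_forest[of "{}" R L ends] forest_over_subset[of ends "{}" E L] finR finE ends_in
    unfolding L_def by (simp add: sym_def)
  moreover have "ncomp R {} = card E + 1"
    using spanning_tree_ncomp[OF finR Rne finE ends_in tree] by simp
  moreover have "card E = card L + card {e\<in>E. t < c e}"
  proof -
    have "E = L \<union> {e\<in>E. t < c e}" "L \<inter> {e\<in>E. t < c e} = {}" unfolding L_def by auto
    then show ?thesis using finE by (metis card_Un_disjoint finite_Un)
  qed
  ultimately show ?thesis unfolding L_def by simp
qed

lemma drop_threshold_bound:
  assumes finR: "finite R" and Rne: "R \<noteq> {}" and finE: "finite E"
    and ends_in: "\<forall>e\<in>E. fst (ends e) \<in> R \<and> snd (ends e) \<in> R"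
    and tree: "is_spanning_tree_contr R ends E {} E"
    and KR: "K \<subseteq> R" and Kne: "K \<noteq> {}"
    and mst: "is_mst_contr R ends E c K F"
  shows "hits R (edge_rel ends {e\<in>E. c e \<le> t}) K \<le> card {e\<in>E - F. t < c e} + 1"
proof -
  define Q where "Q = edge_rel ends {e\<in>E. c e \<le> t}"
  have "ncomp R (Q \<union> K \<times> K) + hits R Q K = ncomp R Q + 1"
    using ncomp_Un_square[OF finR sym_edge_rel KR Kne] unfolding Q_def .
  moreover have "card {e\<in>E. t < c e} + 1 = ncomp R Q"
    unfolding Q_def by (rule tree_threshold_count[OF finR Rne finE ends_in tree])
  moreover have "card {e\<in>E. t < c e} + 1 \<le> card {e\<in>E - F. t < c e} + ncomp R (K \<times> K \<union> Q)"
    unfolding Q_def by (rule mst_threshold[OF finR Rne finE ends_in mst])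
  ultimately show ?thesis unfolding Q_def by (simp add: Un_commute)
qed

lemma finite_hyperedges: "finite R \<Longrightarrow> finite (hyperedges R)"
  unfolding hyperedges_def by (rule finite_subset[of _ "Pow R"]) auto

text \<open>Fractional bound: summing the subtour constraints over the components of Q (which
  partition R) and subtracting the result from the equality constraint gives
  \<Sum>K x K (hits K - 1) \<ge> ncomp - 1.\<close>
lemma fractional_hits_bound:
  fixes x :: "'a set \<Rightarrow> real"
  assumes finR: "finite R" and symQ: "sym Q" and QR: "Q \<subseteq> R \<times> R"
    and subtour: "\<forall>S. S \<subseteq> R \<and> S \<noteq> {} \<longrightarrow>
        (\<Sum>K\<in>{K\<in>hyperedges R. K \<inter> S \<noteq> {}}. x K * (real (card (K \<inter> S)) - 1))
          \<le> real (card S) - 1"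
    and total: "(\<Sum>K\<in>hyperedges R. x K * (real (card K) - 1)) = real (card R) - 1"
  shows "real (ncomp R Q) - 1 \<le> (\<Sum>K\<in>hyperedges R. x K * (real (hits R Q K) - 1))"
proof -
  define H where "H = hyperedges R"
  define Cs where "Cs = components R Q"
  define excess :: "'a set \<Rightarrow> 'a set \<Rightarrow> real"
    where "excess K C = (if K \<inter> C \<noteq> {} then real (card (K \<inter> C)) - 1 else 0)" for K C
  have finH: "finite H" unfolding H_def using finR by (rule finite_hyperedges)
  have HR: "K \<subseteq> R" if "K \<in> H" for K using that unfolding H_def hyperedges_def by blast
  have per_component: "(\<Sum>K\<in>H. x K * excess K C) \<le> real (card C) - 1" if C: "C \<in> Cs" for C
  proof -
    have "C \<subseteq> R" "C \<noteq> {}"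
      using component_subset[OF QR] C unfolding Cs_def components_def by auto
    then have "(\<Sum>K\<in>{K\<in>H. K \<inter> C \<noteq> {}}. x K * (real (card (K \<inter> C)) - 1)) \<le> real (card C) - 1"
      using subtour unfolding H_def by blast
    moreover have "(\<Sum>K\<in>{K\<in>H. K \<inter> C \<noteq> {}}. x K * (real (card (K \<inter> C)) - 1))
                     = (\<Sum>K\<in>H. x K * excess K C)"
      using finH unfolding excess_def by (simp add: sum.inter_filter if_distrib cong: if_cong)
    ultimately show ?thesis by simp
  qed
  have "(\<Sum>K\<in>H. x K * (real (card K) - real (hits R Q K))) = (\<Sum>K\<in>H. x K * (\<Sum>C\<in>Cs. excess K C))"
    using sum_components_excess[OF finR symQ QR HR] unfolding Cs_def excess_def by simp
  also have "\<dots> = (\<Sum>C\<in>Cs. \<Sum>K\<in>H. x K * excess K C)"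
    by (simp add: sum_distrib_left sum.swap[of _ H])
  also have "\<dots> \<le> (\<Sum>C\<in>Cs. real (card C) - 1)"
    by (rule sum_mono) (rule per_component)
  also have "\<dots> = real (card R) - real (ncomp R Q)"
    using sum_card_Int_components[OF finR symQ QR order.refl] component_subset[OF QR]
    unfolding Cs_def ncomp_def by (simp add: sum_subtractf Int_absorb1 flip: of_nat_sum)
  finally have "(\<Sum>K\<in>H. x K * (real (card K) - real (hits R Q K))) \<le> real (card R) - real (ncomp R Q)" .
  moreover have "(\<Sum>K\<in>H. x K * (real (hits R Q K) - 1))
      = (\<Sum>K\<in>H. x K * (real (card K) - 1)) - (\<Sum>K\<in>H. x K * (real (card K) - real (hits R Q K)))"
    by (simp add: sum_subtractf[symmetric] algebra_simps)
  ultimately show ?thesis using total unfolding H_def by simp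
qed

lemma threshold_bound:
  fixes c :: "'e \<Rightarrow> real" and x :: "'a set \<Rightarrow> real" and F :: "'a set \<Rightarrow> 'e set"
  assumes finR: "finite R" and Rne: "R \<noteq> {}" and finE: "finite E"
    and ends_in: "\<forall>e\<in>E. fst (ends e) \<in> R \<and> snd (ends e) \<in> R"
    and tree: "is_spanning_tree_contr R ends E {} E"
    and x_nonneg: "\<forall>K\<in>hyperedges R. x K \<ge> 0"
    and subtour: "\<forall>S. S \<subseteq> R \<and> S \<noteq> {} \<longrightarrow>
        (\<Sum>K\<in>{K\<in>hyperedges R. K \<inter> S \<noteq> {}}. x K * (real (card (K \<inter> S)) - 1))
          \<le> real (card S) - 1"
    and total: "(\<Sum>K\<in>hyperedges R. x K * (real (card K) - 1)) = real (card R) - 1"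
    and mst: "\<forall>K\<in>hyperedges R. is_mst_contr R ends E c K (F K)"
  shows "real (card {e\<in>E. t < c e}) \<le> (\<Sum>K\<in>hyperedges R. x K * real (card {e\<in>E - F K. t < c e}))"
proof -
  define Q where "Q = edge_rel ends {e\<in>E. c e \<le> t}"
  have QR: "Q \<subseteq> R \<times> R" unfolding Q_def using ends_in by (intro edge_rel_subset) auto
  have per_hyperedge: "x K * (real (hits R Q K) - 1) \<le> x K * real (card {e\<in>E - F K. t < c e})"
    if K: "K \<in> hyperedges R" for K
  proof -
    have "K \<subseteq> R" "K \<noteq> {}" using K unfolding hyperedges_def by auto
    then have "hits R Q K \<le> card {e\<in>E - F K. t < c e} + 1"
      unfolding Q_def using mst K by (intro drop_threshold_bound[OF finR Rne finE ends_in tree]) auto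
    then show ?thesis using x_nonneg K by (intro mult_left_mono) auto
  qed
  have "card {e\<in>E. t < c e} + 1 = ncomp R Q"
    unfolding Q_def by (rule tree_threshold_count[OF finR Rne finE ends_in tree])
  then have "real (card {e\<in>E. t < c e}) = real (ncomp R Q) - 1" by simp
  also have "\<dots> \<le> (\<Sum>K\<in>hyperedges R. x K * (real (hits R Q K) - 1))"
    by (rule fractional_hits_bound[OF finR sym_edge_rel[of ends] QR[unfolded Q_def] subtour total,
          folded Q_def])
  also have "\<dots> \<le> (\<Sum>K\<in>hyperedges R. x K * real (card {e\<in>E - F K. t < c e}))"
    by (rule sum_mono) (rule per_hyperedge)
  finally show ?thesis .
qed

text \<open>Layer-cake principle: if every upper level set {a > t} has nonnegative total weight and
  a \<ge> 0, then \<Sum> w a \<ge> 0.  Proof by induction on the support, shifting a down by its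
  minimum value.\<close>
lemma sum_shift_threshold:
  fixes w a :: "'j \<Rightarrow> real"
  assumes finJ: "finite J" and above: "\<forall>j\<in>J. \<mu> \<le> a j"
  shows "(\<Sum>j\<in>J. w j * a j) = \<mu> * (\<Sum>j\<in>J. w j) + (\<Sum>j\<in>{j\<in>J. \<mu> < a j}. w j * (a j - \<mu>))"
proof -
  have "(\<Sum>j\<in>J. w j * a j) = \<mu> * (\<Sum>j\<in>J. w j) + (\<Sum>j\<in>J. w j * (a j - \<mu>))"
    by (simp add: sum_distrib_left algebra_simps sum.distrib sum_subtractf)
  also have "(\<Sum>j\<in>J. w j * (a j - \<mu>)) = (\<Sum>j\<in>J. if \<mu> < a j then w j * (a j - \<mu>) else 0)"
    using above by (intro sum.cong) auto
  also have "\<dots> = (\<Sum>j\<in>{j\<in>J. \<mu> < a j}. w j * (a j - \<mu>))"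
    using finJ by (simp add: sum.inter_filter)
  finally show ?thesis .
qed

lemma layer_cake_nonneg:
  fixes w a :: "'j \<Rightarrow> real"
  assumes "finite J" "\<forall>j\<in>J. 0 \<le> a j" "\<forall>t. 0 \<le> (\<Sum>j\<in>{j\<in>J. t < a j}. w j)"
  shows "0 \<le> (\<Sum>j\<in>J. w j * a j)"
  using assms
proof (induction "card J" arbitrary: J a rule: less_induct)
  case less
  show ?case
  proof (cases "J = {}")
    case False
    define \<mu> where "\<mu> = Min (a ` J)"
    define J' where "J' = {j\<in>J. \<mu> < a j}"
    have finJ: "finite J" by fact
    have \<mu>_in: "\<mu> \<in> a ` J" unfolding \<mu>_def using finJ False by simp
    have below: "\<forall>j\<in>J. \<mu> \<le> a j" unfolding \<mu>_def using finJ by simp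
    have "J' \<subset> J" using \<mu>_in unfolding J'_def by auto
    then have smaller: "card J' < card J" using finJ by (simp add: psubset_card_mono)
    have "0 \<le> (\<Sum>j\<in>J'. w j * (a j - \<mu>))"
    proof (rule less.hyps[OF smaller])
      show "finite J'" unfolding J'_def using finJ by simp
      show "\<forall>j\<in>J'. 0 \<le> a j - \<mu>" unfolding J'_def by auto
      have "{j\<in>J'. t < a j - \<mu>} = {j\<in>J. max 0 t + \<mu> < a j}" for t
        unfolding J'_def by auto
      then show "\<forall>t. 0 \<le> (\<Sum>j\<in>{j\<in>J'. t < a j - \<mu>}. w j)" using less.prems(3) by simp
    qed
    moreover have "0 \<le> (\<Sum>j\<in>J. w j)"
    proof -
      have "{j\<in>J. -1 < a j} = J" using less.prems(2) by force
      then show ?thesis using less.prems(3) by metis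
    qed
    moreover have "0 \<le> \<mu>" using \<mu>_in less.prems(2) by auto
    ultimately show ?thesis
      unfolding sum_shift_threshold[OF finJ below] J'_def[symmetric] by simp
  qed simp
qed

lemma threshold_sum_le:
  fixes x :: "'i \<Rightarrow> real" and c :: "'e \<Rightarrow> real" and D :: "'i \<Rightarrow> 'e set"
  assumes finI: "finite I" and finE: "finite E" and DE: "\<forall>i\<in>I. D i \<subseteq> E"
    and c_nonneg: "\<forall>e\<in>E. 0 \<le> c e"
    and levels: "\<forall>t. real (card {e\<in>E. t < c e}) \<le> (\<Sum>i\<in>I. x i * real (card {e\<in>D i. t < c e}))"
  shows "sum c E \<le> (\<Sum>i\<in>I. x i * sum c (D i))"
proof -
  define J where "J = Sigma I D <+> E"
  define w :: "('i \<times> 'e) + 'e \<Rightarrow> real" where "w = case_sum (\<lambda>p. x (fst p)) (\<lambda>_. -1)"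
  define a :: "('i \<times> 'e) + 'e \<Rightarrow> real" where "a = case_sum (\<lambda>p. c (snd p)) c"
  have finD: "\<forall>i\<in>I. finite (B i)" if "\<forall>i\<in>I. B i \<subseteq> D i" for B
    using that DE finE by (meson finite_subset subset_trans)
  have Sigma_sum: "(\<Sum>p\<in>Sigma I B. x (fst p) * g (snd p)) = (\<Sum>i\<in>I. x i * sum g (B i))"
    if "\<forall>i\<in>I. B i \<subseteq> D i" for B and g :: "'e \<Rightarrow> real"
    using sum.Sigma[OF finI finD[OF that], of "\<lambda>i e. x i * g e"]
    by (simp add: case_prod_beta' sum_distrib_left)
  have finJ: "finite J" unfolding J_def using finI finD[of D] finE by simp
  have "0 \<le> (\<Sum>j\<in>J. w j * a j)"
  proof (rule layer_cake_nonneg[OF finJ])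
    show "\<forall>j\<in>J. 0 \<le> a j" unfolding J_def a_def using c_nonneg DE by fastforce
    show "\<forall>t. 0 \<le> (\<Sum>j\<in>{j\<in>J. t < a j}. w j)"
    proof
      fix t
      have "{j\<in>J. t < a j} = Sigma I (\<lambda>i. {e\<in>D i. t < c e}) <+> {e\<in>E. t < c e}"
        unfolding J_def a_def by auto
      then have "(\<Sum>j\<in>{j\<in>J. t < a j}. w j)
          = (\<Sum>i\<in>I. x i * real (card {e\<in>D i. t < c e})) - real (card {e\<in>E. t < c e})"
        using Sigma_sum[of "\<lambda>i. {e\<in>D i. t < c e}" "\<lambda>_. 1"] finI finD[of D] finE
        unfolding w_def by (simp add: sum.Plus comp_def)
      then show "0 \<le> (\<Sum>j\<in>{j\<in>J. t < a j}. w j)" using levels by simp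
    qed
  qed
  moreover have "(\<Sum>j\<in>J. w j * a j) = (\<Sum>i\<in>I. x i * sum c (D i)) - sum c E"
    using Sigma_sum[of D c] finI finD[of D] finE unfolding J_def w_def a_def
    by (simp add: sum.Plus comp_def sum_negf)
  ultimately show ?thesis by simp
qed

lemma drop_T_via_mst:
  fixes c :: "'e \<Rightarrow> real"
  assumes finE: "finite E" and tree: "is_spanning_tree_contr R ends E {} E"
  shows "\<exists>F. is_mst_contr R ends E c K F \<and> drop_T R ends E c K = sum c (E - F)"
proof -
  have "(edge_rel ends E)\<^sup>* \<subseteq> (K \<times> K \<union> edge_rel ends E)\<^sup>*" by (rule rtrancl_mono) blast
  then have "\<forall>u\<in>R. \<forall>v\<in>R. (u, v) \<in> (K \<times> K \<union> edge_rel ends E)\<^sup>*"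
    using tree unfolding spanning_tree_contr_iff by auto
  then obtain F0 where "is_spanning_tree_contr R ends E K F0"
    using spanning_tree_exists[OF finE] by blast
  then obtain F where mst: "is_mst_contr R ends E c K F" and cost: "mst_contr R ends E c K = sum c F"
    using mst_exists[OF finE] by blast
  have "F \<subseteq> E" using mst unfolding is_mst_contr_def spanning_tree_contr_iff by blast
  then have "drop_T R ends E c K = sum c (E - F)"
    unfolding drop_T_def cost using finE by (simp add: sum_diff)
  then show ?thesis using mst by blast
qed

theorem lemma1:
  fixes R :: "'a set" and E :: "'e set" and ends :: "'e \<Rightarrow> 'a \<times> 'a"
    and c :: "'e \<Rightarrow> real" and x :: "'a set \<Rightarrow> real"
  assumes finR: "finite R"
    and finE: "finite E"
    and ends_in: "\<forall>e\<in>E. fst (ends e) \<in> R \<and> snd (ends e) \<in> R"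
    and tree: "is_spanning_tree_contr R ends E {} E"
    and c_nonneg: "\<forall>e\<in>E. c e \<ge> 0"
    and x_nonneg: "\<forall>K\<in>hyperedges R. x K \<ge> 0"
    and subtour: "\<forall>S. S \<subseteq> R \<and> S \<noteq> {} \<longrightarrow>
        (\<Sum>K\<in>{K\<in>hyperedges R. K \<inter> S \<noteq> {}}. x K * (real (card (K \<inter> S)) - 1))
          \<le> real (card S) - 1"
    and total: "(\<Sum>K\<in>hyperedges R. x K * (real (card K) - 1)) = real (card R) - 1"
  shows "(\<Sum>K\<in>hyperedges R. x K * drop_T R ends E c K) \<ge> sum c E"
proof -
  have Rne: "R \<noteq> {}"
  proof
    assume "R = {}"
    then have "hyperedges R = {}" unfolding hyperedges_def by auto
    then show False using total \<open>R = {}\<close> by simp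
  qed
  obtain F where mst: "\<And>K. is_mst_contr R ends E c K (F K)"
    and drop: "\<And>K. drop_T R ends E c K = sum c (E - F K)"
    using drop_T_via_mst[OF finE tree] by metis
  have "sum c E \<le> (\<Sum>K\<in>hyperedges R. x K * sum c (E - F K))"
  proof (rule threshold_sum_le[OF finite_hyperedges[OF finR] finE _ c_nonneg])
    show "\<forall>t. real (card {e\<in>E. t < c e})
              \<le> (\<Sum>K\<in>hyperedges R. x K * real (card {e\<in>E - F K. t < c e}))"
      using threshold_bound[OF finR Rne finE ends_in tree x_nonneg subtour total] mst by blast
  qed blast
  then show ?thesis by (simp add: drop)
qed

end
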